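(* Let $(M,d)$ be a pointed metric space. The space $\mathrm{Lip}_0(M)$ has the $w^*$-D2P if and only if $M$ has the Lip-LTP.
   Context: $M$ has base point $0$; $\mathrm{Lip}_0(M)$ is the real Banach space of Lipschitz $f\colon M\to\mathbb R$ with $f(0)=0$, normed by the best Lipschitz constant, with unit ball $B_{\mathrm{Lip}_0(M)}$. $\mathrm{Lip}_0(M)$ is the dual of the Lipschitz-free space $\mathcal F(M)$, the norm-closed linear span of the evaluations $\delta_x$ ($x\in M$) in $\mathrm{Lip}_0(M)^*$; the weak-star topology on $\mathrm{Lip}_0(M)$ is the one induced by $\mathcal F(M)$. $\mathrm{Lip}_0(M)$ has the $w^*$-D2P if every nonempty relatively weak-star open subset of $B_{\mathrm{Lip}_0(M)}$ has diameter $2$. $M$ has the Lip-LTP if for every finite $N\subseteq M$, every $\varepsilon>0$ and every $f\in B_{\mathrm{Lip}_0(M)}$ there exist $u,v\in M$ with $u\ne v$ such that for all $x,y\in N$, $(1-\varepsilon)(|f(x)-f(y)|+d(u,v))\le d(x,u)+d(y,v)$. *)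

theory Defs
  imports "HOL-Analysis.Analysis"
begin

definition Lip0 :: "'a::metric_space \<Rightarrow> ('a \<Rightarrow> real) set" where
  "Lip0 z = {f. f z = 0 \<and> (\<exists>C. C-lipschitz_on UNIV f)}"

definition lip_norm :: "('a::metric_space \<Rightarrow> real) \<Rightarrow> real" where
  "lip_norm f = Inf {C. 0 \<le> C \<and> C-lipschitz_on UNIV f}"

definition Lip0_ball :: "'a::metric_space \<Rightarrow> ('a \<Rightarrow> real) set" where
  "Lip0_ball z = {f \<in> Lip0 z. lip_norm f \<le> 1}"

text \<open>The Lipschitz-free space F(M), viewed as functionals on Lip0: the elements of
  Lip0^* that are norm limits (in the dual norm) of finite linear combinations of
  evaluation functionals delta_x.\<close>
definition free_space :: "'a::metric_space \<Rightarrow> (('a \<Rightarrow> real) \<Rightarrow> real) set" where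
  "free_space z = {\<phi>. \<forall>e>0. \<exists>S a. finite S \<and>
      (\<forall>f\<in>Lip0 z. \<bar>\<phi> f - (\<Sum>x\<in>S. a x * f x)\<bar> \<le> e * lip_norm f)}"

definition wstar_open :: "'a::metric_space \<Rightarrow> ('a \<Rightarrow> real) set \<Rightarrow> bool" where
  "wstar_open z U \<longleftrightarrow> U \<subseteq> Lip0 z \<and>
     (\<forall>f\<in>U. \<exists>\<Phi> e. finite \<Phi> \<and> \<Phi> \<subseteq> free_space z \<and> e > 0 \<and>
        {g \<in> Lip0 z. \<forall>\<phi>\<in>\<Phi>. \<bar>\<phi> g - \<phi> f\<bar> < e} \<subseteq> U)"

definition wstar_D2P :: "'a::metric_space \<Rightarrow> bool" where
  "wstar_D2P z \<longleftrightarrow> (\<forall>U. wstar_open z U \<and> U \<inter> Lip0_ball z \<noteq> {} \<longrightarrow>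
     Sup {lip_norm (\<lambda>x. f x - g x) | f g. f \<in> U \<inter> Lip0_ball z \<and> g \<in> U \<inter> Lip0_ball z} = 2)"

definition Lip_LTP :: "'a::metric_space \<Rightarrow> bool" where
  "Lip_LTP z \<longleftrightarrow> (\<forall>N \<epsilon> f. finite N \<and> \<epsilon> > 0 \<and> f \<in> Lip0_ball z \<longrightarrow>
     (\<exists>u v. u \<noteq> v \<and> (\<forall>x\<in>N. \<forall>y\<in>N.
        (1 - \<epsilon>) * (\<bar>f x - f y\<bar> + dist u v) \<le> dist x u + dist y v)))"

end

theory Submission
  imports Defs
begin

text \<open>
  (\<open>\<Rightarrow>\<close>) Evaluations at points are weak-star continuous, so the functions close to \<open>f\<close>
  on a finite set \<open>N\<close> form a weak-star neighbourhood of \<open>f\<close>. The w*-D2P yields \<open>g\<close>, \<open>h\<close>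
  in it with \<open>\<parallel>g - h\<parallel>\<close> close to 2, hence points \<open>u \<noteq> v\<close> at which \<open>g\<close> rises and
  \<open>h\<close> falls with slope almost 1. Comparing \<open>g u - g v\<close> and \<open>h v - h u\<close> with the values on
  \<open>N\<close> gives the Lip-LTP inequality up to an additive error, which is absorbed using the
  minimal separation of the points of \<open>N\<close>.

  (\<open>\<Leftarrow>\<close>) Since the elements of \<open>\<F>(M)\<close> are norm limits of finitely supported ones, every
  weak-star neighbourhood of \<open>f\<close> contains all elements of the unit ball close to \<open>f\<close> on some
  finite set \<open>N\<close>. For Lip-LTP points \<open>u, v\<close> of \<open>N \<union> {0}\<close>, the function \<open>(1 - \<epsilon>) f\<close> on
  \<open>N\<close> has two 1-Lipschitz extensions, one increasing and one decreasing by
  \<open>(1 - \<epsilon>) d(u, v)\<close> from \<open>v\<close> to \<open>u\<close>; their difference has norm at least \<open>2 (1 - \<epsilon>)\<close>.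
\<close>

lemma lipschitz_on_realI:
  fixes f :: "'a::metric_space \<Rightarrow> real"
  assumes "\<And>x y. x \<in> X \<Longrightarrow> y \<in> X \<Longrightarrow> f x - f y \<le> L * dist x y" "0 \<le> L"
  shows "L-lipschitz_on X f"
  using assms by (intro lipschitz_onI) (metis abs_le_iff dist_commute dist_real_def minus_diff_eq)

lemma lipschitz_on_realD:
  fixes f :: "'a::metric_space \<Rightarrow> real"
  assumes "L-lipschitz_on X f" "x \<in> X" "y \<in> X"
  shows "f x - f y \<le> L * dist x y"
  using lipschitz_onD[OF assms] by (simp add: dist_real_def)

lemma lip_norm_le:
  assumes "C-lipschitz_on UNIV f"
  shows "lip_norm f \<le> C"
  unfolding lip_norm_def
  by (rule cInf_lower) (use assms lipschitz_on_nonneg in \<open>auto intro: bdd_belowI[of _ 0]\<close>)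

lemma lip_norm_lipschitz:
  assumes "C-lipschitz_on UNIV f"
  shows "(lip_norm f)-lipschitz_on UNIV f"
proof (rule lipschitz_on_realI)
  have admissible: "{C. 0 \<le> C \<and> C-lipschitz_on UNIV f} \<noteq> {}"
    using assms lipschitz_on_nonneg by auto
  show "0 \<le> lip_norm f"
    unfolding lip_norm_def by (rule cInf_greatest[OF admissible]) auto
  fix x y :: 'a
  show "f x - f y \<le> lip_norm f * dist x y"
  proof (cases "x = y")
    case False
    have "(f x - f y) / dist x y \<le> lip_norm f"
      unfolding lip_norm_def
    proof (rule cInf_greatest[OF admissible])
      fix D assume "D \<in> {C. 0 \<le> C \<and> C-lipschitz_on UNIV f}"
      then show "(f x - f y) / dist x y \<le> D"
        using False lipschitz_on_realD[of D UNIV f x y] by (simp add: divide_le_eq)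
    qed
    then show ?thesis using False by (simp add: divide_le_eq)
  qed simp
qed

lemma lip_norm_ge:
  assumes "C-lipschitz_on UNIV f" "p \<noteq> q" "c * dist p q \<le> f p - f q"
  shows "c \<le> lip_norm f"
proof -
  have "c * dist p q \<le> lip_norm f * dist p q"
    using assms(3) lipschitz_on_realD[OF lip_norm_lipschitz[OF assms(1)]] by (meson UNIV_I order_trans)
  then show ?thesis using assms(2) by simp
qed

lemma lip_norm_less_imp_steep:
  assumes "c < lip_norm f" "0 \<le> c"
  shows "\<exists>p q. c * dist p q < f p - f q"
proof (rule ccontr)
  assume "\<not> ?thesis"
  then have "c-lipschitz_on UNIV f"
    using assms(2) by (intro lipschitz_on_realI) (auto simp: not_less)
  then show False using lip_norm_le assms(1) by fastforce
qed

lemma Lip0_ball_iff: "f \<in> Lip0_ball z \<longleftrightarrow> f z = 0 \<and> 1-lipschitz_on UNIV f"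
  unfolding Lip0_ball_def Lip0_def
  using lip_norm_le lip_norm_lipschitz lipschitz_on_le by blast

lemma Lip0_ball_diff_le: "f \<in> Lip0_ball z \<Longrightarrow> f x - f y \<le> dist x y"
  using lipschitz_on_realD[of 1 UNIV f x y] by (simp add: Lip0_ball_iff)

lemma lip_norm_diff_Lip0_ball:
  assumes "f \<in> Lip0_ball z" "g \<in> Lip0_ball z"
  shows "lip_norm (\<lambda>x. f x - g x) \<le> 2"
  using lipschitz_on_diff[of 1 UNIV f 1 g] assms by (intro lip_norm_le) (simp add: Lip0_ball_iff)

lemma cSup_eq_iff_approx:
  fixes S :: "real set"
  assumes "S \<noteq> {}" "\<And>s. s \<in> S \<Longrightarrow> s \<le> c"
  shows "Sup S = c \<longleftrightarrow> (\<forall>t<c. \<exists>s\<in>S. t < s)"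
proof
  assume "Sup S = c"
  then show "\<forall>t<c. \<exists>s\<in>S. t < s"
    using less_cSup_iff[OF assms(1) bdd_aboveI[OF assms(2)]] by blast
next
  assume approx: "\<forall>t<c. \<exists>s\<in>S. t < s"
  show "Sup S = c"
  proof (rule cSup_eq_non_empty[OF assms])
    fix y assume "\<And>s. s \<in> S \<Longrightarrow> s \<le> y"
    then show "c \<le> y" using approx by (meson not_le order_less_le_trans)
  qed
qed

lemma wstar_D2P_iff:
  "wstar_D2P z \<longleftrightarrow> (\<forall>U. wstar_open z U \<longrightarrow> (\<forall>f \<in> U \<inter> Lip0_ball z. \<forall>t<2.
     \<exists>g \<in> U \<inter> Lip0_ball z. \<exists>h \<in> U \<inter> Lip0_ball z. t < lip_norm (\<lambda>x. g x - h x)))"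
proof -
  have diam: "Sup {lip_norm (\<lambda>x. g x - h x) | g h. g \<in> V \<and> h \<in> V} = 2 \<longleftrightarrow>
      (\<forall>t<2. \<exists>g \<in> V. \<exists>h \<in> V. t < lip_norm (\<lambda>x. g x - h x))"
    if "V \<noteq> {}" "V \<subseteq> Lip0_ball z" for V
  proof (rule cSup_eq_iff_approx[THEN trans])
    show "{lip_norm (\<lambda>x. g x - h x) | g h. g \<in> V \<and> h \<in> V} \<noteq> {}"
      using that(1) by blast
    show "s \<le> 2" if "s \<in> {lip_norm (\<lambda>x. g x - h x) | g h. g \<in> V \<and> h \<in> V}" for s
      using that \<open>V \<subseteq> Lip0_ball z\<close> lip_norm_diff_Lip0_ball by blast
  qed blast
  have "(wstar_open z U \<and> U \<inter> Lip0_ball z \<noteq> {} \<longrightarrow>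
      Sup {lip_norm (\<lambda>x. g x - h x) | g h. g \<in> U \<inter> Lip0_ball z \<and> h \<in> U \<inter> Lip0_ball z} = 2)
    \<longleftrightarrow> (wstar_open z U \<longrightarrow> (\<forall>f \<in> U \<inter> Lip0_ball z. \<forall>t<2.
      \<exists>g \<in> U \<inter> Lip0_ball z. \<exists>h \<in> U \<inter> Lip0_ball z. t < lip_norm (\<lambda>x. g x - h x)))" for U
    using diam[of "U \<inter> Lip0_ball z"] by blast
  then show ?thesis
    unfolding wstar_D2P_def by (rule iff_allI)
qed

lemma evaluation_in_free_space: "(\<lambda>g. g x) \<in> free_space z"
proof -
  have "0 \<le> lip_norm f" if "f \<in> Lip0 z" for f
    using that lip_norm_lipschitz lipschitz_on_nonneg by (fastforce simp: Lip0_def)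
  then show ?thesis
    unfolding free_space_def mem_Collect_eq
    by (intro allI impI exI[of _ "{x}"] exI[of _ "\<lambda>_. 1"]) auto
qed

lemma wstar_open_pointwise_nbhd:
  assumes "finite N"
  shows "wstar_open z {g \<in> Lip0 z. \<forall>x\<in>N. \<bar>g x - f x\<bar> < \<eta>}" (is "wstar_open z ?U")
  unfolding wstar_open_def
proof (intro conjI ballI)
  show "?U \<subseteq> Lip0 z" by auto
  fix f' assume f': "f' \<in> ?U"
  define e where "e = Min (insert 1 ((\<lambda>x. \<eta> - \<bar>f' x - f x\<bar>) ` N))"
  have "e > 0" unfolding e_def using assms f' by (subst Min_gr_iff) auto
  have e_le: "e \<le> \<eta> - \<bar>f' x - f x\<bar>" if "x \<in> N" for x
    unfolding e_def using assms that by auto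
  show "\<exists>\<Phi> e. finite \<Phi> \<and> \<Phi> \<subseteq> free_space z \<and> e > 0 \<and>
      {g \<in> Lip0 z. \<forall>\<phi>\<in>\<Phi>. \<bar>\<phi> g - \<phi> f'\<bar> < e} \<subseteq> ?U"
  proof (intro exI conjI)
    show "finite ((\<lambda>x g. g x) ` N)" using assms by simp
    show "(\<lambda>x g. g x) ` N \<subseteq> free_space z" using evaluation_in_free_space by blast
    show "{g \<in> Lip0 z. \<forall>\<phi>\<in>(\<lambda>x g. g x) ` N. \<bar>\<phi> g - \<phi> f'\<bar> < e} \<subseteq> ?U"
      using e_le by fastforce
  qed fact
qed

lemma free_space_pointwise_continuous:
  assumes "\<phi> \<in> free_space z" "e > 0"
  shows "\<exists>S \<delta>. finite S \<and> \<delta> > 0 \<and> (\<forall>f \<in> Lip0_ball z. \<forall>g \<in> Lip0_ball z.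
           (\<forall>x\<in>S. \<bar>g x - f x\<bar> \<le> \<delta>) \<longrightarrow> \<bar>\<phi> g - \<phi> f\<bar> < e)"
proof -
  have "\<forall>e>0. \<exists>S a. finite S \<and> (\<forall>f\<in>Lip0 z. \<bar>\<phi> f - (\<Sum>x\<in>S. a x * f x)\<bar> \<le> e * lip_norm f)"
    using assms(1) unfolding free_space_def by (rule CollectD)
  moreover have "e/3 > 0" using assms(2) by simp
  ultimately obtain S a where S: "finite S"
    and approx: "\<forall>f\<in>Lip0 z. \<bar>\<phi> f - (\<Sum>x\<in>S. a x * f x)\<bar> \<le> e/3 * lip_norm f"
    by blast
  define K where "K = 1 + (\<Sum>x\<in>S. \<bar>a x\<bar>)"
  have "K > 0" unfolding K_def by (simp add: add_pos_nonneg sum_nonneg)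
  define \<delta> where "\<delta> = e / (3 * K)"
  have "\<delta> > 0" unfolding \<delta>_def using \<open>K > 0\<close> assms(2) by simp
  have approx_ball: "\<bar>\<phi> f - (\<Sum>x\<in>S. a x * f x)\<bar> \<le> e/3" if "f \<in> Lip0_ball z" for f
  proof -
    have "f \<in> Lip0 z" "lip_norm f \<le> 1" using that by (simp_all add: Lip0_ball_def)
    moreover have "e/3 * lip_norm f \<le> e/3"
      using \<open>lip_norm f \<le> 1\<close> \<open>e/3 > 0\<close> by (simp add: mult_left_le)
    ultimately show ?thesis using approx by fastforce
  qed
  have "\<bar>\<phi> g - \<phi> f\<bar> < e"
    if f: "f \<in> Lip0_ball z" and g: "g \<in> Lip0_ball z" and close: "\<forall>x\<in>S. \<bar>g x - f x\<bar> \<le> \<delta>"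
    for f g
  proof -
    have "\<bar>(\<Sum>x\<in>S. a x * g x) - (\<Sum>x\<in>S. a x * f x)\<bar> = \<bar>\<Sum>x\<in>S. a x * (g x - f x)\<bar>"
      by (simp add: sum_subtractf[symmetric] algebra_simps)
    also have "\<dots> \<le> (\<Sum>x\<in>S. \<bar>a x\<bar> * \<delta>)"
      using close by (intro order_trans[OF sum_abs] sum_mono) (simp add: abs_mult mult_left_mono)
    also have "\<dots> < K * \<delta>"
      using \<open>\<delta> > 0\<close> by (simp add: K_def sum_distrib_right[symmetric] distrib_right)
    also have "\<dots> = e/3"
      unfolding \<delta>_def using \<open>K > 0\<close> by simp
    finally show ?thesis using approx_ball[OF f] approx_ball[OF g] by linarith
  qed
  then show ?thesis using S \<open>\<delta> > 0\<close> by blast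
qed

lemma free_space_finite_pointwise_continuous:
  assumes "finite \<Phi>" "\<Phi> \<subseteq> free_space z" "e > 0"
  shows "\<exists>S \<delta>. finite S \<and> \<delta> > 0 \<and> (\<forall>f \<in> Lip0_ball z. \<forall>g \<in> Lip0_ball z.
           (\<forall>x\<in>S. \<bar>g x - f x\<bar> \<le> \<delta>) \<longrightarrow> (\<forall>\<phi>\<in>\<Phi>. \<bar>\<phi> g - \<phi> f\<bar> < e))"
  using assms
proof (induction \<Phi> rule: finite_induct)
  case empty
  show ?case by (intro exI[of _ "{}"] exI[of _ 1]) simp
next
  case (insert \<phi> \<Phi>)
  obtain S \<delta> where S: "finite S" "\<delta> > 0" and
    cont: "\<forall>f \<in> Lip0_ball z. \<forall>g \<in> Lip0_ball z.
             (\<forall>x\<in>S. \<bar>g x - f x\<bar> \<le> \<delta>) \<longrightarrow> (\<forall>\<phi>\<in>\<Phi>. \<bar>\<phi> g - \<phi> f\<bar> < e)"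
    using insert.IH[OF _ insert.prems(2)] insert.prems(1) by blast
  obtain S' \<delta>' where S': "finite S'" "\<delta>' > 0" and
    cont': "\<forall>f \<in> Lip0_ball z. \<forall>g \<in> Lip0_ball z.
              (\<forall>x\<in>S'. \<bar>g x - f x\<bar> \<le> \<delta>') \<longrightarrow> \<bar>\<phi> g - \<phi> f\<bar> < e"
    using free_space_pointwise_continuous[of \<phi> z e] insert.prems by blast
  show ?case
  proof (intro exI[of _ "S \<union> S'"] exI[of _ "min \<delta> \<delta>'"] conjI ballI impI)
    show "finite (S \<union> S')" "0 < min \<delta> \<delta>'" using S S' by simp_all
    fix f g \<psi>
    assume fg: "f \<in> Lip0_ball z" "g \<in> Lip0_ball z" and "\<forall>x\<in>S \<union> S'. \<bar>g x - f x\<bar> \<le> min \<delta> \<delta>'"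
      and "\<psi> \<in> insert \<phi> \<Phi>"
    then have "\<forall>x\<in>S. \<bar>g x - f x\<bar> \<le> \<delta>" "\<forall>x\<in>S'. \<bar>g x - f x\<bar> \<le> \<delta>'" by auto
    then show "\<bar>\<psi> g - \<psi> f\<bar> < e"
      using cont[rule_format, OF fg] cont'[rule_format, OF fg] \<open>\<psi> \<in> insert \<phi> \<Phi>\<close> by blast
  qed
qed

lemma wstar_open_contains_pointwise_nbhd:
  assumes "wstar_open z U" "f \<in> U" "f \<in> Lip0_ball z"
  obtains N \<eta> where "finite N" "\<eta> > 0"
    "\<And>g. g \<in> Lip0_ball z \<Longrightarrow> \<forall>x\<in>N. \<bar>g x - f x\<bar> \<le> \<eta> \<Longrightarrow> g \<in> U"
proof -
  obtain \<Phi> e where \<Phi>: "finite \<Phi>" "\<Phi> \<subseteq> free_space z" "e > 0"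
    and sub: "{g \<in> Lip0 z. \<forall>\<phi>\<in>\<Phi>. \<bar>\<phi> g - \<phi> f\<bar> < e} \<subseteq> U"
    using assms(1,2) unfolding wstar_open_def by blast
  obtain N \<eta> where "finite N" "\<eta> > 0" and cont: "\<forall>f \<in> Lip0_ball z. \<forall>g \<in> Lip0_ball z.
      (\<forall>x\<in>N. \<bar>g x - f x\<bar> \<le> \<eta>) \<longrightarrow> (\<forall>\<phi>\<in>\<Phi>. \<bar>\<phi> g - \<phi> f\<bar> < e)"
    using free_space_finite_pointwise_continuous[OF \<Phi>] by blast
  show thesis
  proof (rule that[OF \<open>finite N\<close> \<open>\<eta> > 0\<close>])
    fix g assume g: "g \<in> Lip0_ball z" and close: "\<forall>x\<in>N. \<bar>g x - f x\<bar> \<le> \<eta>"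
    have "\<forall>\<phi>\<in>\<Phi>. \<bar>\<phi> g - \<phi> f\<bar> < e" using cont assms(3) g close by blast
    moreover have "g \<in> Lip0 z" using g by (simp add: Lip0_ball_def)
    ultimately show "g \<in> U" using sub by blast
  qed
qed

lemma one_lipschitz_extension_stretch:
  fixes \<phi> :: "'a::metric_space \<Rightarrow> real"
  assumes N: "finite N" "N \<noteq> {}" and lip: "1-lipschitz_on N \<phi>"
    and r: "r \<le> dist u v"
    and uv: "\<And>x y. x \<in> N \<Longrightarrow> y \<in> N \<Longrightarrow> \<phi> y - \<phi> x + r \<le> dist x u + dist y v"
  shows "\<exists>g. 1-lipschitz_on UNIV g \<and> (\<forall>x\<in>N. g x = \<phi> x) \<and> r \<le> g u - g v"
proof -
  \<comment> \<open>\<open>L\<close> is the least 1-Lipschitz extension of \<open>\<phi>\<close>; the cone \<open>L v + r - d(u, -)\<close> raises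
    it at \<open>u\<close> and, by the hypothesis \<open>uv\<close>, stays below \<open>\<phi>\<close> on \<open>N\<close>.\<close>
  define L where "L p = Max ((\<lambda>x. \<phi> x - dist x p) ` N)" for p
  have L_ge: "\<phi> x - dist x p \<le> L p" if "x \<in> N" for x p
    unfolding L_def using N that by auto
  have L_attained: "\<exists>x\<in>N. L p = \<phi> x - dist x p" for p
  proof -
    have "L p \<in> (\<lambda>x. \<phi> x - dist x p) ` N" unfolding L_def using N by (intro Max_in) auto
    then show ?thesis by auto
  qed
  have L_lip: "L p - L q \<le> dist p q" for p q
  proof -
    obtain x where "x \<in> N" "L p = \<phi> x - dist x p" using L_attained by blast
    then show ?thesis using L_ge[of x q] dist_triangle[of x q p] by (simp add: dist_commute)
  qed
  have L_on_N: "L x = \<phi> x" if "x \<in> N" for x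
  proof -
    obtain y where "y \<in> N" "L x = \<phi> y - dist y x" using L_attained by blast
    then show ?thesis using L_ge[OF that, of x] lipschitz_on_realD[OF lip \<open>y \<in> N\<close> that] by simp
  qed
  define g where "g p = max (L p) (L v + r - dist u p)" for p
  show ?thesis
  proof (intro exI conjI ballI)
    show "1-lipschitz_on UNIV g"
    proof (rule lipschitz_on_realI)
      fix p q :: 'a
      show "g p - g q \<le> 1 * dist p q"
        using L_lip[of p q] dist_triangle[of u q p] unfolding g_def by (simp add: dist_commute)
    qed simp
    show "g x = \<phi> x" if "x \<in> N" for x
    proof -
      obtain y where "y \<in> N" "L v = \<phi> y - dist y v" using L_attained by blast
      then have "L v + r - dist u x \<le> \<phi> x" using uv[OF that \<open>y \<in> N\<close>] by (simp add: dist_commute)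
      then show ?thesis unfolding g_def using L_on_N[OF that] by simp
    qed
    show "r \<le> g u - g v"
      unfolding g_def using r by simp
  qed
qed

lemma far_pair_of_ltp_points:
  assumes f: "f \<in> Lip0_ball z" and N: "finite N" "z \<in> N" and \<epsilon>: "0 \<le> \<epsilon>" "\<epsilon> \<le> 1"
    and "u \<noteq> v"
    and ltp: "\<And>x y. x \<in> N \<Longrightarrow> y \<in> N \<Longrightarrow>
      (1 - \<epsilon>) * (\<bar>f x - f y\<bar> + dist u v) \<le> dist x u + dist y v"
  shows "\<exists>g h. g \<in> Lip0_ball z \<and> h \<in> Lip0_ball z \<and> (\<forall>x\<in>N. g x = (1 - \<epsilon>) * f x \<and> h x = (1 - \<epsilon>) * f x)
    \<and> 2 * (1 - \<epsilon>) \<le> lip_norm (\<lambda>x. g x - h x)"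
proof -
  define \<phi> where "\<phi> x = (1 - \<epsilon>) * f x" for x
  define r where "r = (1 - \<epsilon>) * dist u v"
  have "1-lipschitz_on UNIV \<phi>"
    using lipschitz_on_cmult_real_upper[of 1 UNIV f "1 - \<epsilon>" 1] f \<epsilon>
    by (simp add: \<phi>_def Lip0_ball_iff)
  then have lip: "1-lipschitz_on N \<phi>" by (rule lipschitz_on_subset) simp
  have stretch: "\<bar>\<phi> x - \<phi> y\<bar> + r \<le> dist x u + dist y v" if "x \<in> N" "y \<in> N" for x y
  proof -
    have "\<bar>\<phi> x - \<phi> y\<bar> = (1 - \<epsilon>) * \<bar>f x - f y\<bar>"
      unfolding \<phi>_def using \<epsilon> by (simp add: abs_mult flip: right_diff_distrib)
    then show ?thesis using ltp[OF that] by (simp add: r_def distrib_left)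
  qed
  have r: "r \<le> dist u v" "r \<le> dist v u"
    unfolding r_def using \<epsilon> by (auto simp: dist_commute mult_left_le_one_le)
  obtain g where g: "1-lipschitz_on UNIV g" "\<forall>x\<in>N. g x = \<phi> x" "r \<le> g u - g v"
  proof -
    have "\<phi> y - \<phi> x + r \<le> dist x u + dist y v" if "x \<in> N" "y \<in> N" for x y
      using stretch[OF that] by linarith
    then show thesis using one_lipschitz_extension_stretch[OF N(1) _ lip r(1)] N(2) that by blast
  qed
  obtain h where h: "1-lipschitz_on UNIV h" "\<forall>x\<in>N. h x = \<phi> x" "r \<le> h v - h u"
  proof -
    have "\<phi> y - \<phi> x + r \<le> dist x v + dist y u" if "x \<in> N" "y \<in> N" for x y
      using stretch[OF that(2,1)] by linarith
    then show thesis using one_lipschitz_extension_stretch[OF N(1) _ lip r(2)] N(2) that by blast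
  qed
  have ball: "g \<in> Lip0_ball z" "h \<in> Lip0_ball z"
    using g h N(2) f by (auto simp: Lip0_ball_iff \<phi>_def)
  have "2 * (1 - \<epsilon>) \<le> lip_norm (\<lambda>x. g x - h x)"
  proof (rule lip_norm_ge)
    show "2-lipschitz_on UNIV (\<lambda>x. g x - h x)"
      using lipschitz_on_diff[OF g(1) h(1)] by simp
    show "2 * (1 - \<epsilon>) * dist u v \<le> (g u - h u) - (g v - h v)"
      using g(3) h(3) unfolding r_def by linarith
  qed fact
  then show ?thesis using ball g(2) h(2) unfolding \<phi>_def by blast
qed

lemma finite_separation:
  fixes N :: "'a::metric_space set"
  assumes "finite N"
  shows "\<exists>m>0. \<forall>x\<in>N. \<forall>y\<in>N. x \<noteq> y \<longrightarrow> m \<le> dist x y"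
proof -
  define D where "D = (\<lambda>(x, y). dist x y) ` (N \<times> N) - {0}"
  have "finite D" unfolding D_def using assms by simp
  show ?thesis
  proof (intro exI conjI ballI impI)
    have "\<forall>d\<in>D. d > 0" by (auto simp: D_def)
    then show "Min (insert 1 D) > 0" using \<open>finite D\<close> by simp
    fix x y assume "x \<in> N" "y \<in> N" "x \<noteq> y"
    then have "dist x y \<in> D" unfolding D_def by force
    then show "Min (insert 1 D) \<le> dist x y" using \<open>finite D\<close> by simp
  qed
qed

lemma steep_pair_of_far_pair:
  assumes "g \<in> Lip0_ball z" "h \<in> Lip0_ball z" "2 - \<delta> < lip_norm (\<lambda>x. g x - h x)" "\<delta> \<le> 2"
  shows "\<exists>u v. u \<noteq> v \<and> (1 - \<delta>) * dist u v < g u - g v \<and> (1 - \<delta>) * dist u v < h v - h u"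
proof -
  obtain u v where uv: "(2 - \<delta>) * dist u v < (g u - h u) - (g v - h v)"
    using lip_norm_less_imp_steep[OF assms(3)] assms(4) by auto
  then have "u \<noteq> v" by auto
  moreover have "g u - g v \<le> dist u v" "h v - h u \<le> dist u v"
    using Lip0_ball_diff_le[OF assms(1), of u v] Lip0_ball_diff_le[OF assms(2), of v u]
    by (simp_all add: dist_commute)
  ultimately show ?thesis using uv by (intro exI[of _ u] exI[of _ v]) (auto simp: algebra_simps)
qed

lemma near_steep_pair_bound:
  assumes "g \<in> Lip0_ball z" "c * dist u v < g u - g v" "\<bar>g x - f x\<bar> < \<eta>" "\<bar>g y - f y\<bar> < \<eta>"
  shows "f y - f x + c * dist u v - 2 * \<eta> < dist x u + dist y v"
  using Lip0_ball_diff_le[OF assms(1), of u x] Lip0_ball_diff_le[OF assms(1), of y v] assms(2-)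
  by (simp add: dist_commute abs_less_iff)

text \<open>In the application \<open>F, D, R, d\<close> are \<open>\<bar>f x - f y\<bar>\<close>, \<open>d(u, v)\<close>, \<open>d(x, u) + d(y, v)\<close>
  and \<open>d(x, y)\<close>, and \<open>m\<close> is the minimal separation of \<open>N\<close>.\<close>

lemma slack_absorption:
  fixes F D R d m \<epsilon> :: real
  assumes "0 \<le> \<epsilon>" "0 \<le> F" "0 \<le> D" "F \<le> d" "m \<le> d" "d - D \<le> R"
    and slack: "F + (1 - \<epsilon>/2) * D - \<epsilon> * m / 4 < R"
  shows "(1 - \<epsilon>) * (F + D) \<le> R"
proof (cases "m \<le> 2 * F + 2 * D")
  case True
  have "\<epsilon> * m \<le> \<epsilon> * (2 * F + 2 * D)" using mult_left_mono[OF True assms(1)] .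
  moreover have "0 \<le> \<epsilon> * F" using assms(1,2) by simp
  ultimately show ?thesis using slack by (simp add: algebra_simps)
next
  case False
  then have "F + D \<le> R" using assms by linarith
  moreover have "0 \<le> \<epsilon> * (F + D)" using assms(1-3) by simp
  ultimately show ?thesis by (simp add: algebra_simps)
qed

lemma ltp_inequality_of_near_steep_pairs:
  assumes f: "f \<in> Lip0_ball z" and g: "g \<in> Lip0_ball z" and h: "h \<in> Lip0_ball z" and "0 \<le> \<epsilon>"
    and steep: "(1 - \<epsilon>/2) * dist u v < g u - g v" "(1 - \<epsilon>/2) * dist u v < h v - h u"
    and near: "\<forall>w\<in>{x, y}. \<bar>g w - f w\<bar> < \<epsilon> * m / 8 \<and> \<bar>h w - f w\<bar> < \<epsilon> * m / 8"
    and sep: "x \<noteq> y \<Longrightarrow> m \<le> dist x y"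
  shows "(1 - \<epsilon>) * (\<bar>f x - f y\<bar> + dist u v) \<le> dist x u + dist y v"
proof (cases "x = y")
  case True
  have "(1 - \<epsilon>) * dist u v \<le> dist u v"
    using mult_nonneg_nonneg[OF \<open>0 \<le> \<epsilon>\<close> zero_le_dist[of u v]] by (simp add: algebra_simps)
  also have "\<dots> \<le> dist x u + dist y v"
    using True dist_triangle[of u v x] by (simp add: dist_commute)
  finally show ?thesis using True by simp
next
  case False
  have "f y - f x + (1 - \<epsilon>/2) * dist u v - \<epsilon> * m / 4 < dist x u + dist y v"
    using near_steep_pair_bound[OF g steep(1), of x f "\<epsilon> * m / 8" y] near by simp
  moreover have "f x - f y + (1 - \<epsilon>/2) * dist u v - \<epsilon> * m / 4 < dist x u + dist y v"
    using near_steep_pair_bound[OF h, of "1 - \<epsilon>/2" v u y f "\<epsilon> * m / 8" x] steep(2) near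
    by (simp add: dist_commute)
  ultimately have "\<bar>f x - f y\<bar> + (1 - \<epsilon>/2) * dist u v - \<epsilon> * m / 4 < dist x u + dist y v"
    by (simp add: abs_if)
  then show ?thesis
  proof (rule slack_absorption[rotated -1])
    show "\<bar>f x - f y\<bar> \<le> dist x y"
      using Lip0_ball_diff_le[OF f, of x y] Lip0_ball_diff_le[OF f, of y x] by (simp add: dist_commute)
    show "dist x y - dist u v \<le> dist x u + dist y v"
      using dist_triangle[of x y u] dist_triangle[of u y v] by (simp add: dist_commute)
  qed (use \<open>0 \<le> \<epsilon>\<close> sep[OF False] in auto)
qed

lemma wstar_D2P_imp_Lip_LTP:
  assumes D2P: "wstar_D2P z"
  shows "Lip_LTP z"
  unfolding Lip_LTP_def
proof (intro allI impI, elim conjE)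
  fix N :: "'a set" and \<epsilon> :: real and f assume "finite N" "\<epsilon> > 0" and f: "f \<in> Lip0_ball z"
  define \<epsilon>' where "\<epsilon>' = min \<epsilon> 1"
  have \<epsilon>': "0 < \<epsilon>'" "\<epsilon>' \<le> 1" "\<epsilon>' \<le> \<epsilon>" using \<open>\<epsilon> > 0\<close> by (auto simp: \<epsilon>'_def)
  obtain m where "m > 0" and sep: "\<forall>x\<in>N. \<forall>y\<in>N. x \<noteq> y \<longrightarrow> m \<le> dist x y"
    using finite_separation[OF \<open>finite N\<close>] by blast
  define U where "U = {g \<in> Lip0 z. \<forall>x\<in>N. \<bar>g x - f x\<bar> < \<epsilon>' * m / 8}"
  have "wstar_open z U" unfolding U_def using \<open>finite N\<close> by (rule wstar_open_pointwise_nbhd)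
  moreover have "f \<in> U \<inter> Lip0_ball z" using f \<epsilon>' \<open>m > 0\<close> by (simp add: U_def Lip0_ball_def)
  moreover have "2 - \<epsilon>'/2 < 2" using \<epsilon>'(1) by simp
  ultimately obtain g h where g: "g \<in> U \<inter> Lip0_ball z" and h: "h \<in> U \<inter> Lip0_ball z"
    and "2 - \<epsilon>'/2 < lip_norm (\<lambda>x. g x - h x)"
    using D2P unfolding wstar_D2P_iff by blast
  then obtain u v where "u \<noteq> v" and steep: "(1 - \<epsilon>'/2) * dist u v < g u - g v"
    "(1 - \<epsilon>'/2) * dist u v < h v - h u"
    using steep_pair_of_far_pair[of g z h "\<epsilon>'/2"] \<epsilon>'(2) by auto
  show "\<exists>u v. u \<noteq> v \<and> (\<forall>x\<in>N. \<forall>y\<in>N. (1 - \<epsilon>) * (\<bar>f x - f y\<bar> + dist u v) \<le> dist x u + dist y v)"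
  proof (intro exI conjI ballI)
    fix x y assume "x \<in> N" "y \<in> N"
    have "(1 - \<epsilon>) * (\<bar>f x - f y\<bar> + dist u v) \<le> (1 - \<epsilon>') * (\<bar>f x - f y\<bar> + dist u v)"
      using \<epsilon>'(3) by (intro mult_right_mono) auto
    also have "\<dots> \<le> dist x u + dist y v"
      using ltp_inequality_of_near_steep_pairs[OF f _ _ _ steep, where m = m and x = x and y = y] g h \<epsilon>'(1)
        \<open>x \<in> N\<close> \<open>y \<in> N\<close> sep by (auto simp: U_def)
    finally show "(1 - \<epsilon>) * (\<bar>f x - f y\<bar> + dist u v) \<le> dist x u + dist y v" .
  qed fact
qed

lemma finite_small_multiplier:
  fixes f :: "'a \<Rightarrow> real"
  assumes "finite N" "\<eta> > 0"
  shows "\<exists>\<epsilon>>0. \<forall>x\<in>N. \<epsilon> * \<bar>f x\<bar> \<le> \<eta>"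
proof -
  define K where "K = 1 + (\<Sum>x\<in>N. \<bar>f x\<bar>)"
  have "K > 0" unfolding K_def by (simp add: add_pos_nonneg sum_nonneg)
  have "\<eta> / K * \<bar>f x\<bar> \<le> \<eta>" if "x \<in> N" for x
  proof -
    have "\<bar>f x\<bar> \<le> K"
      unfolding K_def using assms(1) that member_le_sum[of x N "\<lambda>x. \<bar>f x\<bar>"] by simp
    then have "\<eta> / K * \<bar>f x\<bar> \<le> \<eta> / K * K"
      using assms(2) \<open>K > 0\<close> by (intro mult_left_mono) auto
    then show ?thesis using \<open>K > 0\<close> by simp
  qed
  then show ?thesis using assms(2) \<open>K > 0\<close> by (intro exI[of _ "\<eta> / K"]) auto
qed

lemma Lip_LTP_imp_wstar_D2P:
  assumes ltp: "Lip_LTP z"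
  shows "wstar_D2P z"
  unfolding wstar_D2P_iff
proof (intro allI impI ballI)
  fix U f and t :: real
  assume U: "wstar_open z U" and f: "f \<in> U \<inter> Lip0_ball z" and t: "t < 2"
  obtain N0 \<eta> where "finite N0" "\<eta> > 0"
    and nbhd: "\<And>g. g \<in> Lip0_ball z \<Longrightarrow> \<forall>x\<in>N0. \<bar>g x - f x\<bar> \<le> \<eta> \<Longrightarrow> g \<in> U"
    using wstar_open_contains_pointwise_nbhd[OF U] f by blast
  define N where "N = insert z N0"
  have "finite N" "z \<in> N" using \<open>finite N0\<close> by (auto simp: N_def)
  obtain \<epsilon>0 where "\<epsilon>0 > 0" and \<epsilon>0: "\<forall>x\<in>N. \<epsilon>0 * \<bar>f x\<bar> \<le> \<eta>"
    using finite_small_multiplier[OF \<open>finite N\<close> \<open>\<eta> > 0\<close>] by blast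
  define \<epsilon> where "\<epsilon> = min 1 (min ((2 - t) / 4) \<epsilon>0)"
  have "\<epsilon> \<le> (2 - t) / 4" unfolding \<epsilon>_def by linarith
  then have \<epsilon>: "0 < \<epsilon>" "\<epsilon> \<le> 1" "t < 2 * (1 - \<epsilon>)"
    unfolding \<epsilon>_def using t \<open>\<epsilon>0 > 0\<close> by auto
  have small: "\<epsilon> * \<bar>f x\<bar> \<le> \<eta>" if "x \<in> N" for x
    using \<epsilon>0 that mult_right_mono[of \<epsilon> \<epsilon>0 "\<bar>f x\<bar>"] by (fastforce simp: \<epsilon>_def)
  obtain u v where "u \<noteq> v"
    and "\<forall>x\<in>N. \<forall>y\<in>N. (1 - \<epsilon>) * (\<bar>f x - f y\<bar> + dist u v) \<le> dist x u + dist y v"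
    using ltp \<open>finite N\<close> \<epsilon>(1) f unfolding Lip_LTP_def by blast
  then obtain g h where g: "g \<in> Lip0_ball z" "\<forall>x\<in>N. g x = (1 - \<epsilon>) * f x"
    and h: "h \<in> Lip0_ball z" "\<forall>x\<in>N. h x = (1 - \<epsilon>) * f x"
    and far: "2 * (1 - \<epsilon>) \<le> lip_norm (\<lambda>x. g x - h x)"
    using far_pair_of_ltp_points[OF _ \<open>finite N\<close> \<open>z \<in> N\<close>, of f \<epsilon> u v] f \<epsilon> by auto
  have "k \<in> U" if "k \<in> Lip0_ball z" "\<forall>x\<in>N. k x = (1 - \<epsilon>) * f x" for k
  proof (rule nbhd[OF that(1)])
    have "\<bar>k x - f x\<bar> = \<epsilon> * \<bar>f x\<bar>" if "x \<in> N" for x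
    proof -
      have "k x - f x = - (\<epsilon> * f x)"
        using that \<open>\<forall>x\<in>N. k x = (1 - \<epsilon>) * f x\<close> by (simp add: algebra_simps)
      then show ?thesis using \<epsilon>(1) by (simp add: abs_mult)
    qed
    then show "\<forall>x\<in>N0. \<bar>k x - f x\<bar> \<le> \<eta>"
      using small by (simp add: N_def)
  qed
  then show "\<exists>g \<in> U \<inter> Lip0_ball z. \<exists>h \<in> U \<inter> Lip0_ball z. t < lip_norm (\<lambda>x. g x - h x)"
    using g h far \<epsilon>(3) by (meson IntI order_less_le_trans)
qed

theorem proposition4p2:
  fixes z :: "'a::metric_space"
  shows "wstar_D2P z \<longleftrightarrow> Lip_LTP z"
  using wstar_D2P_imp_Lip_LTP Lip_LTP_imp_wstar_D2P by blast

end
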